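(* Let $\pi:(X,T)\to(Y,S)$ be a proximal extension of minimal topological dynamical systems. If $(Y,S)$ is not strongly $\mathcal{F}_t$-sensitive, then neither is $(X,T)$.
   Context: A topological dynamical system: compact metric space with continuous surjection; minimal means every orbit is dense. A proximal extension is a factor map $\pi$ ($\pi\circ T=S\circ\pi$, continuous surjective) such that every pair $(x,y)$ with $\pi(x)=\pi(y)$ is proximal, i.e. $\inf_n d(T^nx,T^ny)=0$. A set $F\subset\mathbb{Z}_+$ is thick if it contains arbitrarily long blocks of consecutive integers. A system $(X,T)$ is strongly $\mathcal{F}_t$-sensitive if there is $\delta>0$ such that for each nonempty open $U$ there are $x,y\in U$ with $\{n\in\mathbb{Z}_+:d(T^nx,T^ny)>\delta\}$ thick. *)

theory Defs
  imports "HOL-Analysis.Analysis"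
begin

definition tds :: "'a::metric_space set \<Rightarrow> ('a \<Rightarrow> 'a) \<Rightarrow> bool" where
  "tds X T \<longleftrightarrow> compact X \<and> X \<noteq> {} \<and> continuous_on X T \<and> T ` X = X"

definition minimal_sys :: "'a::metric_space set \<Rightarrow> ('a \<Rightarrow> 'a) \<Rightarrow> bool" where
  "minimal_sys X T \<longleftrightarrow> tds X T \<and> (\<forall>x\<in>X. closure {(T ^^ n) x | n. True} = X)"

definition factor_map :: "'a::metric_space set \<Rightarrow> ('a \<Rightarrow> 'a) \<Rightarrow> 'b::metric_space set \<Rightarrow> ('b \<Rightarrow> 'b) \<Rightarrow> ('a \<Rightarrow> 'b) \<Rightarrow> bool" where
  "factor_map X T Y S p \<longleftrightarrow> continuous_on X p \<and> p ` X = Y \<and> (\<forall>x\<in>X. p (T x) = S (p x))"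

definition proximal :: "('a \<Rightarrow> 'a) \<Rightarrow> 'a::metric_space \<Rightarrow> 'a \<Rightarrow> bool" where
  "proximal T x y \<longleftrightarrow> (INF n. dist ((T ^^ n) x) ((T ^^ n) y)) = 0"

definition proximal_extension :: "'a::metric_space set \<Rightarrow> ('a \<Rightarrow> 'a) \<Rightarrow> 'b::metric_space set \<Rightarrow> ('b \<Rightarrow> 'b) \<Rightarrow> ('a \<Rightarrow> 'b) \<Rightarrow> bool" where
  "proximal_extension X T Y S p \<longleftrightarrow> factor_map X T Y S p \<and>
     (\<forall>x\<in>X. \<forall>y\<in>X. p x = p y \<longrightarrow> proximal T x y)"

definition thick :: "nat set \<Rightarrow> bool" where
  "thick F \<longleftrightarrow> (\<forall>k. \<exists>m. {m..<m+k} \<subseteq> F)"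

definition strongly_Ft_sensitive :: "'a::metric_space set \<Rightarrow> ('a \<Rightarrow> 'a) \<Rightarrow> bool" where
  "strongly_Ft_sensitive X T \<longleftrightarrow> (\<exists>\<delta>>0. \<forall>U. openin (top_of_set X) U \<and> U \<noteq> {} \<longrightarrow>
     (\<exists>x\<in>U. \<exists>y\<in>U. thick {n. dist ((T ^^ n) x) ((T ^^ n) y) > \<delta>}))"

end

theory Submission
  imports Defs
begin

text \<open>Suppose \<open>X\<close> is strongly \<open>\<F>\<^sub>t\<close>-sensitive with constant \<open>\<delta>\<close>. By compactness,
  proximality of the fibres is uniform: there are \<open>N\<close> and \<open>\<epsilon> > 0\<close> such that
  \<open>d(p a, p b) \<le> \<epsilon>\<close> forces \<open>d(T\<^sup>j a, T\<^sup>j b) < \<delta>\<close> for some \<open>j \<le> N\<close>. Hence along a block of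
  length \<open>k + N\<close> on which \<open>x, y\<close> stay \<open>\<delta>\<close>-apart, their images stay \<open>\<epsilon>\<close>-apart on the first
  \<open>k\<close> times. Lifting a nonempty open set of \<open>Y\<close> to its preimage shows that \<open>Y\<close> is strongly
  \<open>\<F>\<^sub>t\<close>-sensitive with constant \<open>\<epsilon>\<close>.\<close>

lemma funpow_in_invariant:
  assumes "T ` X \<subseteq> X" "x \<in> X"
  shows "(T ^^ n) x \<in> X"
  using assms by (induction n) auto

lemma continuous_on_funpow:
  assumes "T ` X \<subseteq> X" "continuous_on X T"
  shows "continuous_on X (T ^^ n)"
proof (induction n)
  case (Suc n)
  have "continuous_on X (T \<circ> (T ^^ n))"
    using Suc funpow_in_invariant[OF assms(1)]
    by (intro continuous_on_compose continuous_on_subset[OF assms(2)]) auto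
  then show ?case by simp
qed simp

lemma factor_map_funpow:
  assumes "factor_map X T Y S p" "T ` X \<subseteq> X" "x \<in> X"
  shows "(S ^^ n) (p x) = p ((T ^^ n) x)"
proof (induction n)
  case (Suc n)
  have "(T ^^ n) x \<in> X" using funpow_in_invariant assms(2,3) .
  then show ?case using Suc assms(1) unfolding factor_map_def by simp
qed simp

lemma openin_factor_preimage:
  assumes "factor_map X T Y S p" "openin (top_of_set Y) V"
  shows "openin (top_of_set X) (X \<inter> p -` V)"
proof (rule continuous_openin_preimage[OF _ _ assms(2)])
  show "continuous_on X p" "p \<in> X \<rightarrow> Y" using assms(1) unfolding factor_map_def by auto
qed

lemma not_proximal_if_separated:
  assumes "\<delta> > 0" "\<And>n. \<delta> \<le> dist ((T ^^ n) x) ((T ^^ n) y)"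
  shows "\<not> proximal T x y"
proof -
  have "\<delta> \<le> (INF n. dist ((T ^^ n) x) ((T ^^ n) y))"
    by (rule cINF_greatest) (use assms(2) in auto)
  then show ?thesis using assms(1) unfolding proximal_def by simp
qed

lemma proximal_extension_uniformly_proximal:
  assumes "tds X T" "proximal_extension X T Y S p" "\<delta> > 0"
  obtains N \<epsilon> where "\<epsilon> > 0"
    "\<And>a b. a \<in> X \<Longrightarrow> b \<in> X \<Longrightarrow> dist (p a) (p b) \<le> \<epsilon> \<Longrightarrow>
       \<exists>j\<le>N. dist ((T ^^ j) a) ((T ^^ j) b) < \<delta>"
proof (rule ccontr)
  txt \<open>Otherwise a limit of pairs violating the claim for \<open>N = k\<close> and \<open>\<epsilon> = 1/(k+1)\<close>
    lies in one fibre but stays \<open>\<delta>\<close>-apart forever.\<close>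
  assume "\<not> thesis"
  have "\<exists>a\<in>X. \<exists>b\<in>X. dist (p a) (p b) \<le> inverse (real (Suc k)) \<and>
      (\<forall>j\<le>k. \<delta> \<le> dist ((T ^^ j) a) ((T ^^ j) b))" for k
    using that[of "inverse (real (Suc k))" k] \<open>\<not> thesis\<close>
    by (meson not_less inverse_positive_iff_positive of_nat_0_less_iff zero_less_Suc)
  then obtain a where "\<forall>k. a k \<in> X \<and> (\<exists>b\<in>X. dist (p (a k)) (p b) \<le> inverse (real (Suc k)) \<and>
      (\<forall>j\<le>k. \<delta> \<le> dist ((T ^^ j) (a k)) ((T ^^ j) b)))"
    by metis
  then obtain b where "\<forall>k. a k \<in> X \<and> b k \<in> X \<and> dist (p (a k)) (p (b k)) \<le> inverse (real (Suc k)) \<and>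
      (\<forall>j\<le>k. \<delta> \<le> dist ((T ^^ j) (a k)) ((T ^^ j) (b k)))"
    by metis
  then have ab: "\<And>k. a k \<in> X" "\<And>k. b k \<in> X"
      "\<And>k. dist (p (a k)) (p (b k)) \<le> inverse (real (Suc k))"
      "\<And>k j. j \<le> k \<Longrightarrow> \<delta> \<le> dist ((T ^^ j) (a k)) ((T ^^ j) (b k))"
    by auto
  have X: "compact X" "T ` X \<subseteq> X" "continuous_on X T" using assms(1) unfolding tds_def by auto
  have p: "continuous_on X p" using assms(2) unfolding proximal_extension_def factor_map_def by auto
  obtain l r where "l \<in> X \<times> X" "strict_mono r" and lim: "((\<lambda>k. (a k, b k)) \<circ> r) \<longlonglongrightarrow> l"
    using compact_imp_seq_compact[OF compact_Times[OF X(1) X(1)]] ab(1,2)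
    by (elim seq_compactE) auto
  then obtain u v where uv: "u \<in> X" "v \<in> X" "l = (u, v)" and r: "strict_mono r" by auto
  have au: "(\<lambda>k. a (r k)) \<longlonglongrightarrow> u" and bv: "(\<lambda>k. b (r k)) \<longlonglongrightarrow> v"
    using tendsto_fst[OF lim] tendsto_snd[OF lim] uv(3) by (simp_all add: o_def)
  have image_lim: "(\<lambda>k. f (a (r k))) \<longlonglongrightarrow> f u" "(\<lambda>k. f (b (r k))) \<longlonglongrightarrow> f v"
    if "continuous_on X f" for f :: "'a \<Rightarrow> 'c::topological_space"
    using continuous_on_tendsto_compose[OF that au] continuous_on_tendsto_compose[OF that bv]
      uv ab by auto
  have "p u = p v"
  proof -
    have "(\<lambda>k. inverse (real (Suc (r k)))) \<longlonglongrightarrow> 0"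
      using LIMSEQ_subseq_LIMSEQ[OF LIMSEQ_inverse_real_of_nat r] by (simp add: o_def)
    then have "dist (p u) (p v) \<le> 0"
      using ab(3) by (intro tendsto_le[OF _ _ tendsto_dist[OF image_lim[OF p]]]) auto
    then show ?thesis by simp
  qed
  moreover have "\<delta> \<le> dist ((T ^^ j) u) ((T ^^ j) v)" for j
  proof (rule tendsto_lowerbound)
    show "(\<lambda>k. dist ((T ^^ j) (a (r k))) ((T ^^ j) (b (r k)))) \<longlonglongrightarrow> dist ((T ^^ j) u) ((T ^^ j) v)"
      using image_lim[OF continuous_on_funpow[OF X(2,3)]] by (rule tendsto_dist)
    show "\<forall>\<^sub>F k in sequentially. \<delta> \<le> dist ((T ^^ j) (a (r k))) ((T ^^ j) (b (r k)))"
      using ab(4) seq_suble[OF r] le_trans by (blast intro: eventually_sequentiallyI)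
  qed simp
  ultimately show False
    using assms(2,3) uv not_proximal_if_separated unfolding proximal_extension_def by metis
qed

lemma thick_if_misses_bounded_ahead:
  assumes "thick A" "\<And>n. n \<notin> B \<Longrightarrow> \<exists>j\<le>N. n + j \<notin> A"
  shows "thick B"
  unfolding thick_def
proof
  fix k
  obtain m where m: "{m..<m + (k + N)} \<subseteq> A" using assms(1) unfolding thick_def by blast
  have "n \<in> B" if "n \<in> {m..<m + k}" for n
  proof (rule ccontr)
    assume "n \<notin> B"
    then obtain j where "j \<le> N" "n + j \<notin> A" using assms(2) by blast
    moreover have "n + j \<in> {m..<m + (k + N)}" if "j \<le> N" for j
      using \<open>n \<in> {m..<m + k}\<close> that by auto
    ultimately show False using m by blast
  qed
  then show "\<exists>m. {m..<m + k} \<subseteq> B" by blast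
qed

lemma strongly_Ft_sensitive_proximal_factor:
  assumes "tds X T" "proximal_extension X T Y S p" "strongly_Ft_sensitive X T"
  shows "strongly_Ft_sensitive Y S"
proof -
  obtain \<delta> where "\<delta> > 0" and sens: "\<And>U. openin (top_of_set X) U \<Longrightarrow> U \<noteq> {} \<Longrightarrow>
      \<exists>x\<in>U. \<exists>y\<in>U. thick {n. \<delta> < dist ((T ^^ n) x) ((T ^^ n) y)}"
    using assms(3) unfolding strongly_Ft_sensitive_def by blast
  obtain N \<epsilon> where "\<epsilon> > 0" and unif: "\<And>a b. a \<in> X \<Longrightarrow> b \<in> X \<Longrightarrow> dist (p a) (p b) \<le> \<epsilon> \<Longrightarrow>
      \<exists>j\<le>N. dist ((T ^^ j) a) ((T ^^ j) b) < \<delta>"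
    by (rule proximal_extension_uniformly_proximal[OF assms(1,2) \<open>\<delta> > 0\<close>]) blast
  have TX: "T ` X \<subseteq> X" using assms(1) unfolding tds_def by auto
  have fm: "factor_map X T Y S p" using assms(2) unfolding proximal_extension_def by auto
  have "\<exists>x\<in>V. \<exists>y\<in>V. thick {n. \<epsilon> < dist ((S ^^ n) x) ((S ^^ n) y)}"
    if V: "openin (top_of_set Y) V" "V \<noteq> {}" for V
  proof -
    have "X \<inter> p -` V \<noteq> {}"
      using fm V(2) openin_subset[OF V(1)] unfolding factor_map_def by auto
    then obtain x y where xy: "x \<in> X" "p x \<in> V" "y \<in> X" "p y \<in> V"
        and thick_X: "thick {n. \<delta> < dist ((T ^^ n) x) ((T ^^ n) y)}"
      using sens[OF openin_factor_preimage[OF fm V(1)]] by blast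
    have "\<exists>j\<le>N. n + j \<notin> {n. \<delta> < dist ((T ^^ n) x) ((T ^^ n) y)}"
      if "n \<notin> {n. \<epsilon> < dist ((S ^^ n) (p x)) ((S ^^ n) (p y))}" for n
    proof -
      have "dist (p ((T ^^ n) x)) (p ((T ^^ n) y)) \<le> \<epsilon>"
        using that factor_map_funpow[OF fm TX] xy by (simp add: not_less)
      then obtain j where "j \<le> N" "dist ((T ^^ j) ((T ^^ n) x)) ((T ^^ j) ((T ^^ n) y)) < \<delta>"
        using unif funpow_in_invariant[OF TX] xy by blast
      then show ?thesis by (auto simp: funpow_add add.commute)
    qed
    then have "thick {n. \<epsilon> < dist ((S ^^ n) (p x)) ((S ^^ n) (p y))}"
      by (rule thick_if_misses_bounded_ahead[OF thick_X])
    then show ?thesis using xy by blast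
  qed
  then show ?thesis using \<open>\<epsilon> > 0\<close> unfolding strongly_Ft_sensitive_def by blast
qed

theorem proposition5p1:
  fixes X :: "'a::metric_space set" and T :: "'a \<Rightarrow> 'a"
    and Y :: "'b::metric_space set" and S :: "'b \<Rightarrow> 'b" and p :: "'a \<Rightarrow> 'b"
  assumes "minimal_sys X T" and "minimal_sys Y S"
    and "proximal_extension X T Y S p"
    and "\<not> strongly_Ft_sensitive Y S"
  shows "\<not> strongly_Ft_sensitive X T"
  using assms(1,3,4) strongly_Ft_sensitive_proximal_factor
  unfolding minimal_sys_def by blast

end
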